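(* Let $q$ be a prime power and let $\{P_i\}$ be a sequence of integral convex polytopes with $P_i\subseteq[0,q-2]^{n_i}$ (for instance an infinite family of toric codes over $\mathbb{F}_q$). Then the sequence $\{M(P_i)\}$ is unbounded if and only if the sequence $\{L(P_i)\}$ is unbounded.
   Context: $M(P)$ denotes the largest integer $i\ge0$ such that there is a unimodular affine transformation $A$ (a map $x\mapsto Mx+\lambda$ with $M\in GL(n,\mathbb{Z})$, $\lambda\in\mathbb{Z}^n$) with $A([0,1]^i\times\{0\}^{n-i})\subseteq P$. The Minkowski sum of $P,Q\subseteq\mathbb{R}^n$ is $P+Q=\{p+y:p\in P,y\in Q\}$. For an integral convex polytope $P$, its Minkowski length $\ell(P)$ is the largest number of summands in a decomposition $P=P_1+\dots+P_\ell$ into lattice polytopes $P_j$ of positive dimension ($\ell(P)=0$ if $P$ is a point). The full Minkowski length is $L(P)=\max\{\ell(Q): Q\subseteq P \text{ a lattice polytope}\}$. *)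

theory Defs
  imports Complex_Main "HOL-Computational_Algebra.Primes"
begin

text \<open>Points of R^n are modelled as functions nat => real vanishing at coordinates >= n.\<close>

definition in_lattice :: "nat \<Rightarrow> (nat \<Rightarrow> real) \<Rightarrow> bool" where
  "in_lattice n x \<longleftrightarrow> (\<forall>j. x j \<in> \<int>) \<and> (\<forall>j\<ge>n. x j = 0)"

definition conv_fin :: "(nat \<Rightarrow> real) set \<Rightarrow> (nat \<Rightarrow> real) set" where
  "conv_fin S = {x. \<exists>u. (\<forall>y\<in>S. 0 \<le> u y) \<and> (\<Sum>y\<in>S. u y) = 1 \<and>
                       x = (\<lambda>k. \<Sum>y\<in>S. u y * y k)}"

definition lattice_polytope :: "nat \<Rightarrow> (nat \<Rightarrow> real) set \<Rightarrow> bool" where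
  "lattice_polytope n P \<longleftrightarrow>
     (\<exists>S. finite S \<and> S \<noteq> {} \<and> (\<forall>x\<in>S. in_lattice n x) \<and> P = conv_fin S)"

definition msum :: "(nat \<Rightarrow> real) set \<Rightarrow> (nat \<Rightarrow> real) set \<Rightarrow> (nat \<Rightarrow> real) set" where
  "msum P Q = {(\<lambda>k. p k + y k) | p y. p \<in> P \<and> y \<in> Q}"

definition msum_list :: "(nat \<Rightarrow> real) set list \<Rightarrow> (nat \<Rightarrow> real) set" where
  "msum_list Ps = foldr msum Ps {(\<lambda>k. 0)}"

definition pos_dim :: "(nat \<Rightarrow> real) set \<Rightarrow> bool" where
  "pos_dim P \<longleftrightarrow> (\<exists>x\<in>P. \<exists>y\<in>P. x \<noteq> y)"

definition mink_length :: "nat \<Rightarrow> (nat \<Rightarrow> real) set \<Rightarrow> nat" where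
  "mink_length n P = (GREATEST l. l = 0 \<or>
     (\<exists>Ps. length Ps = l \<and> (\<forall>Q\<in>set Ps. lattice_polytope n Q \<and> pos_dim Q) \<and> P = msum_list Ps))"

definition full_mink_length :: "nat \<Rightarrow> (nat \<Rightarrow> real) set \<Rightarrow> nat" where
  "full_mink_length n P = (GREATEST k. \<exists>Q. lattice_polytope n Q \<and> Q \<subseteq> P \<and> k = mink_length n Q)"

definition unimodular :: "nat \<Rightarrow> (nat \<Rightarrow> nat \<Rightarrow> int) \<Rightarrow> bool" where
  "unimodular n M \<longleftrightarrow> (\<exists>N. \<forall>a<n. \<forall>b<n.
      (\<Sum>c<n. M a c * N c b) = (if a = b then 1 else 0) \<and>
      (\<Sum>c<n. N a c * M c b) = (if a = b then 1 else 0))"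

definition aff_map :: "nat \<Rightarrow> (nat \<Rightarrow> nat \<Rightarrow> int) \<Rightarrow> (nat \<Rightarrow> int) \<Rightarrow> (nat \<Rightarrow> real) \<Rightarrow> (nat \<Rightarrow> real)" where
  "aff_map n M lam x = (\<lambda>k. if k < n then of_int (lam k) + (\<Sum>j<n. of_int (M k j) * x j) else 0)"

definition unit_cube :: "nat \<Rightarrow> (nat \<Rightarrow> real) set" where
  "unit_cube i = {x. (\<forall>j<i. 0 \<le> x j \<and> x j \<le> 1) \<and> (\<forall>j\<ge>i. x j = 0)}"

definition cube_number :: "nat \<Rightarrow> (nat \<Rightarrow> real) set \<Rightarrow> nat" where
  "cube_number n P = (GREATEST i. i \<le> n \<and> (\<exists>M lam. unimodular n M \<and> (\<forall>k\<ge>n. lam k = 0) \<and>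
        aff_map n M lam ` unit_cube i \<subseteq> P))"

end

theory Submission
  imports Defs
begin

text \<open>
  The unit cube is the Minkowski sum of its edges, so \<open>M(P) \<le> L(P)\<close>. Conversely, let
  \<open>Q = P\<^sub>1 + \<dots> + P\<^sub>L \<subseteq> P\<close> with \<open>L = L(P)\<close> and pick distinct lattice points \<open>s\<^sub>j, t\<^sub>j \<in> P\<^sub>j\<close>.
  Since the summands can be moved independently inside the box of side \<open>c = q - 2\<close>, the spreads
  \<open>\<bar>t\<^sub>j\<^sub>k - s\<^sub>j\<^sub>k\<bar>\<close> add up to at most \<open>c\<close> in every coordinate. So the integer vectors
  \<open>t\<^sub>j - s\<^sub>j\<close> are nonzero, have entries bounded by \<open>c\<close>, and each coordinate is used by at most
  \<open>c\<close> of them. Integral row reduction, Euclid's algorithm run on at most \<open>c\<close> coordinates that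
  already carry the gcd, sends one of them to a positive multiple of a unit vector while
  disturbing at most \<open>(c + 1) c\<close> others. Greedily, one obtains a unimodular \<open>U\<close> sending
  \<open>i \<ge> L / (1 + (c + 1) c)\<close> of the differences to multiples of distinct unit vectors; the
  corresponding columns of \<open>U\<^sup>-\<^sup>1\<close> span a unimodular cube inside \<open>Q\<close>. Hence
  \<open>L(P) \<le> (1 + (c + 1) c) M(P)\<close>, and the two sequences are bounded together; the hypothesis on
  \<open>q\<close> only enters through \<open>q \<ge> 2\<close>.
\<close>

text \<open>Like the points of \<open>\<real>\<^sup>n\<close> in the definitions, a vector of \<open>\<int>\<^sup>n\<close> is a function
  vanishing from \<open>n\<close> on, and an \<open>n \<times> n\<close> matrix is a function of two indices of which only
  the entries below \<open>n\<close> matter.\<close>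

type_synonym int_vec = "nat \<Rightarrow> int"
type_synonym int_mat = "nat \<Rightarrow> nat \<Rightarrow> int"

definition mat_one :: int_mat where
  "mat_one a b = (if a = b then 1 else 0)"

definition mat_mult :: "nat \<Rightarrow> int_mat \<Rightarrow> int_mat \<Rightarrow> int_mat" where
  "mat_mult n A B = (\<lambda>a b. \<Sum>c<n. A a c * B c b)"

definition mat_vec :: "nat \<Rightarrow> int_mat \<Rightarrow> int_vec \<Rightarrow> int_vec" where
  "mat_vec n A x = (\<lambda>a. if a < n then \<Sum>b<n. A a b * x b else 0)"

definition inverse_mats :: "nat \<Rightarrow> int_mat \<Rightarrow> int_mat \<Rightarrow> bool" where
  "inverse_mats n U V \<longleftrightarrow>
     (\<forall>a<n. \<forall>b<n. mat_mult n U V a b = mat_one a b \<and> mat_mult n V U a b = mat_one a b)"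

definition vanishes_from :: "nat \<Rightarrow> int_vec \<Rightarrow> bool" where
  "vanishes_from n x \<longleftrightarrow> (\<forall>k\<ge>n. x k = 0)"

lemma if_zero_times [simp]: "(if P then u else 0) * (y::int) = (if P then u * y else 0)"
  by simp

lemma times_if_zero [simp]: "(y::int) * (if P then u else 0) = (if P then y * u else 0)"
  by simp

abbreviation coord_vec :: "nat \<Rightarrow> int \<Rightarrow> int_vec" where
  "coord_vec m w \<equiv> \<lambda>a. if a = m then w else 0"

lemma mat_vec_mult: "mat_vec n (mat_mult n A B) x = mat_vec n A (mat_vec n B x)"
proof
  fix a
  have "(\<Sum>c<n. (\<Sum>b<n. A a b * B b c) * x c) = (\<Sum>c<n. \<Sum>b<n. A a b * (B b c * x c))"
    by (simp add: sum_distrib_right mult.assoc)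
  also have "\<dots> = (\<Sum>b<n. A a b * (\<Sum>c<n. B b c * x c))"
    by (subst sum.swap) (simp add: sum_distrib_left)
  finally show "mat_vec n (mat_mult n A B) x a = mat_vec n A (mat_vec n B x) a"
    by (simp add: mat_vec_def mat_mult_def)
qed

lemma mat_mult_assoc: "mat_mult n (mat_mult n A B) C = mat_mult n A (mat_mult n B C)"
  unfolding mat_mult_def
  by (auto simp: sum_distrib_left sum_distrib_right mult.assoc intro!: ext sum.swap)

lemma mat_mult_cong:
  assumes "\<And>a b. a < n \<Longrightarrow> b < n \<Longrightarrow> A a b = A' a b"
    and "\<And>a b. a < n \<Longrightarrow> b < n \<Longrightarrow> B a b = B' a b"
    and "a < n" "b < n"
  shows "mat_mult n A B a b = mat_mult n A' B' a b"
  unfolding mat_mult_def using assms by (auto intro!: sum.cong)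

lemma mat_mult_one_left: "a < n \<Longrightarrow> mat_mult n mat_one A a b = A a b"
  by (simp add: mat_mult_def mat_one_def sum.delta)

lemma mat_vec_one: "vanishes_from n x \<Longrightarrow> mat_vec n mat_one x = x"
  by (auto simp: mat_vec_def mat_one_def vanishes_from_def sum.delta)

lemma mat_vec_cong:
  "(\<And>a b. a < n \<Longrightarrow> b < n \<Longrightarrow> A a b = A' a b) \<Longrightarrow> mat_vec n A x = mat_vec n A' x"
  by (auto simp: mat_vec_def intro!: sum.cong)

lemma vanishes_from_mat_vec: "vanishes_from n (mat_vec n A x)"
  by (simp add: vanishes_from_def mat_vec_def)

lemma inverse_mats_one: "inverse_mats n mat_one mat_one"
  by (simp add: inverse_mats_def mat_mult_one_left)

lemma mat_mult_inverse_middle: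
  assumes "\<And>a b. a < n \<Longrightarrow> b < n \<Longrightarrow> mat_mult n U V a b = mat_one a b"
    and "\<And>a b. a < n \<Longrightarrow> b < n \<Longrightarrow> mat_mult n V2 U2 a b = mat_one a b"
    and "a < n" "b < n"
  shows "mat_mult n (mat_mult n V2 U) (mat_mult n V U2) a b = mat_mult n V2 U2 a b"
proof -
  have "mat_mult n (mat_mult n V2 U) (mat_mult n V U2) a b
      = mat_mult n V2 (mat_mult n (mat_mult n U V) U2) a b"
    by (simp add: mat_mult_assoc)
  also have "\<dots> = mat_mult n V2 (mat_mult n mat_one U2) a b"
    using assms by (intro mat_mult_cong mat_mult_cong[of _ _ "mat_mult n U V"]) auto
  also have "\<dots> = mat_mult n V2 U2 a b"
    using assms by (intro mat_mult_cong) (auto simp: mat_mult_one_left)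
  finally show ?thesis .
qed

lemma inverse_mats_mult:
  assumes "inverse_mats n U V" "inverse_mats n U2 V2"
  shows "inverse_mats n (mat_mult n U2 U) (mat_mult n V V2)"
  using assms mat_mult_inverse_middle[of n U V U2 V2] mat_mult_inverse_middle[of n V2 U2 V U]
  by (simp add: inverse_mats_def)

lemma inverse_mats_cancel:
  "inverse_mats n U V \<Longrightarrow> vanishes_from n x \<Longrightarrow> mat_vec n V (mat_vec n U x) = x"
proof -
  assume inv: "inverse_mats n U V" and x: "vanishes_from n x"
  have "mat_vec n V (mat_vec n U x) = mat_vec n (mat_mult n V U) x" by (simp add: mat_vec_mult)
  also have "\<dots> = mat_vec n mat_one x" using inv by (intro mat_vec_cong) (simp add: inverse_mats_def)
  finally show ?thesis using x mat_vec_one by simp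
qed

lemma inverse_mats_unimodular: "inverse_mats n U V \<Longrightarrow> unimodular n V"
  unfolding inverse_mats_def unimodular_def mat_mult_def mat_one_def by (intro exI[of _ U]) auto

lemma inverse_mats_column:
  assumes "inverse_mats n U V" "vanishes_from n x" "mat_vec n U x = coord_vec m w" "m < n" "k < n"
  shows "x k = V k m * w"
proof -
  have "x k = mat_vec n V (coord_vec m w) k"
    using inverse_mats_cancel[OF assms(1,2)] assms(3) by simp
  also have "\<dots> = V k m * w" using assms(4,5) by (simp add: mat_vec_def sum.delta')
  finally show ?thesis .
qed

definition transvection :: "nat \<Rightarrow> int_vec \<Rightarrow> int_mat" where
  "transvection k r = (\<lambda>a b. mat_one a b + (if b = k then r a else 0))"

definition sign_flip :: "nat \<Rightarrow> int_mat" where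
  "sign_flip k = (\<lambda>a b. if a = b then (if a = k then -1 else 1) else 0)"

definition swap_index :: "nat \<Rightarrow> nat \<Rightarrow> nat \<Rightarrow> nat" where
  "swap_index k m a = (if a = k then m else if a = m then k else a)"

definition coord_swap :: "nat \<Rightarrow> nat \<Rightarrow> int_mat" where
  "coord_swap k m = (\<lambda>a b. if b = swap_index k m a then 1 else 0)"

lemma mat_vec_transvection:
  assumes "k < n" "vanishes_from n x" "vanishes_from n r"
  shows "mat_vec n (transvection k r) x = (\<lambda>a. x a + x k * r a)"
proof
  fix a
  show "mat_vec n (transvection k r) x a = x a + x k * r a"
  proof (cases "a < n")
    case True
    then show ?thesis using assms(1)
      by (simp add: mat_vec_def transvection_def mat_one_def distrib_right sum.distrib
          sum.delta sum.delta')
  qed (use assms in \<open>simp add: mat_vec_def vanishes_from_def\<close>)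
qed

lemma inverse_mats_transvection:
  assumes "k < n" "r k = 0"
  shows "inverse_mats n (transvection k r) (transvection k (\<lambda>a. - r a))"
proof -
  have "mat_mult n (transvection k r) (transvection k s) a b = mat_one a b"
    if "r k = 0" "s k = 0" "\<And>a. r a + s a = 0" "a < n" "b < n" for r s a b
  proof -
    have "mat_mult n (transvection k r) (transvection k s) a b
       = (\<Sum>c<n. (if c = a then mat_one c b else 0) + (if c = k then r a * mat_one c b else 0)
          + (if c = a then (if b = k then s c else 0) else 0)
          + (if c = k then (if b = k then r a * s c else 0) else 0))"
      unfolding mat_mult_def transvection_def by (rule sum.cong)
        (auto simp: mat_one_def algebra_simps)
    also have "\<dots> = mat_one a b + r a * mat_one k b + (if b = k then s a else 0)
        + (if b = k then r a * s k else 0)"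
      using assms that by (simp add: sum.distrib sum.delta)
    also have "\<dots> = mat_one a b" using that by (cases "b = k") (auto simp: mat_one_def)
    finally show ?thesis .
  qed
  then show ?thesis using assms by (simp add: inverse_mats_def)
qed

lemma add_multiple_row:
  assumes "a < n" "b < n" "a \<noteq> b"
  obtains T T' where "inverse_mats n T T'"
    "\<And>y. vanishes_from n y \<Longrightarrow> mat_vec n T y = y(a := y a + t * y b)"
proof
  have "vanishes_from n (coord_vec a t)" using assms(1) by (simp add: vanishes_from_def)
  then show "mat_vec n (transvection b (coord_vec a t)) y = y(a := y a + t * y b)"
    if "vanishes_from n y" for y
    using mat_vec_transvection[OF assms(2) that] by (auto simp: fun_eq_iff)
  show "inverse_mats n (transvection b (coord_vec a t)) (transvection b (\<lambda>c. - coord_vec a t c))"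
    using assms by (intro inverse_mats_transvection) auto
qed

lemma mat_vec_sign_flip:
  assumes "k < n" "vanishes_from n x"
  shows "mat_vec n (sign_flip k) x = x(k := - x k)"
  using assms by (auto simp: mat_vec_def sign_flip_def vanishes_from_def sum.delta')

lemma inverse_mats_sign_flip: "inverse_mats n (sign_flip k) (sign_flip k)"
  by (auto simp: inverse_mats_def mat_mult_def sign_flip_def mat_one_def sum.delta)

lemma mat_vec_coord_swap:
  assumes "k < n" "m < n" "vanishes_from n x"
  shows "mat_vec n (coord_swap k m) x = (\<lambda>a. x (swap_index k m a))"
  using assms
  by (auto simp: mat_vec_def coord_swap_def swap_index_def vanishes_from_def sum.delta')

lemma inverse_mats_coord_swap:
  assumes "k < n" "m < n"
  shows "inverse_mats n (coord_swap k m) (coord_swap k m)"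
proof -
  have "mat_mult n (coord_swap k m) (coord_swap k m) a b = mat_one a b" if "a < n" for a b
  proof -
    have "swap_index k m a < n" using assms that by (simp add: swap_index_def)
    have "mat_mult n (coord_swap k m) (coord_swap k m) a b
        = (\<Sum>c<n. if c = swap_index k m a then (if b = swap_index k m c then 1 else 0) else 0)"
      unfolding mat_mult_def coord_swap_def by (rule sum.cong) auto
    also have "\<dots> = (if b = swap_index k m (swap_index k m a) then 1 else 0)"
      using \<open>swap_index k m a < n\<close> by (simp only: sum.delta finite_lessThan) simp
    finally show ?thesis by (simp add: swap_index_def mat_one_def)
  qed
  then show ?thesis by (simp add: inverse_mats_def)
qed

section \<open>Integral row reduction\<close>

lemma dvd_all_update_add_mult:
  fixes x :: int_vec
  assumes "b \<in> K" "a \<noteq> b"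
  shows "(\<forall>c\<in>K. g dvd (x(a := x a + t * x b)) c) \<longleftrightarrow> (\<forall>c\<in>K. g dvd x c)"
proof
  assume h: "\<forall>c\<in>K. g dvd (x(a := x a + t * x b)) c"
  then have "g dvd x b" using assms by (metis fun_upd_other)
  moreover have "g dvd x a + t * x b" if "a \<in> K" using h that by (metis fun_upd_same)
  ultimately show "\<forall>c\<in>K. g dvd x c" using h
    by (metis dvd_add_left_iff dvd_mult fun_upd_other)
next
  assume "\<forall>c\<in>K. g dvd x c"
  then show "\<forall>c\<in>K. g dvd (x(a := x a + t * x b)) c" using assms by auto
qed

lemma abs_add_sgn_mult_less:
  fixes xa xb :: int
  assumes "xa \<noteq> 0" "xb \<noteq> 0" "\<bar>xb\<bar> \<le> \<bar>xa\<bar>"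
  shows "\<bar>xa + - (sgn xa * sgn xb) * xb\<bar> < \<bar>xa\<bar>"
  using assms by (cases "xa > 0"; cases "xb > 0") (simp_all add: sgn_if abs_if)

lemma euclid_reduction:
  assumes "finite K" "K \<subseteq> {..<n}" "vanishes_from n x" "\<exists>b\<in>K. x b \<noteq> 0"
  shows "\<exists>E E' k v. inverse_mats n E E' \<and> k \<in> K \<and> v \<noteq> 0 \<and>
     (\<forall>y. vanishes_from n y \<longrightarrow> (\<forall>b\<in>K. y b = 0) \<longrightarrow> mat_vec n E y = y) \<and>
     mat_vec n E x = (\<lambda>b. if b \<in> K then coord_vec k v b else x b) \<and>
     (\<forall>g. (\<forall>b\<in>K. g dvd x b) \<longleftrightarrow> g dvd v)"
  using assms(3,4)
proof (induction "\<Sum>b\<in>K. nat \<bar>x b\<bar>" arbitrary: x rule: less_induct)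
  case less
  show ?case
  proof (cases "\<exists>a\<in>K. \<exists>b\<in>K. a \<noteq> b \<and> x a \<noteq> 0 \<and> x b \<noteq> 0")
    case False
    from less.prems obtain k where k: "k \<in> K" "x k \<noteq> 0" by auto
    with False have "\<And>b. b \<in> K \<Longrightarrow> b \<noteq> k \<Longrightarrow> x b = 0" by blast
    then have "mat_vec n mat_one x = (\<lambda>b. if b \<in> K then coord_vec k (x k) b else x b)"
      and "(\<forall>b\<in>K. g dvd x b) \<longleftrightarrow> g dvd x k" for g
      using mat_vec_one[OF less.prems(1)] k by (auto intro!: ext) (metis dvd_0_right)
    then show ?thesis using inverse_mats_one k mat_vec_one by blast
  next
    case True
    then obtain a b where ab: "a \<in> K" "b \<in> K" "a \<noteq> b" "x a \<noteq> 0" "x b \<noteq> 0" "\<bar>x b\<bar> \<le> \<bar>x a\<bar>"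
      by (metis linear)
    define t where "t = - (sgn (x a) * sgn (x b))"
    obtain T T' where T: "inverse_mats n T T'"
      "\<And>y. vanishes_from n y \<Longrightarrow> mat_vec n T y = y(a := y a + t * y b)"
      using add_multiple_row[of a n b] ab assms(2) by blast
    define x' where "x' = x(a := x a + t * x b)"
    have "nat \<bar>x' a\<bar> < nat \<bar>x a\<bar>"
      using abs_add_sgn_mult_less[OF ab(4,5,6)] by (simp add: x'_def t_def)
    then have smaller: "(\<Sum>c\<in>K. nat \<bar>x' c\<bar>) < (\<Sum>c\<in>K. nat \<bar>x c\<bar>)"
      using ab(1) assms(1) by (simp add: sum.remove x'_def)
    have "vanishes_from n x'" using T(2)[OF less.prems(1)] vanishes_from_mat_vec x'_def by metis
    moreover have "\<exists>c\<in>K. x' c \<noteq> 0" using ab by (auto simp: x'_def)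
    ultimately obtain E E' k v where IH: "inverse_mats n E E'" "k \<in> K" "v \<noteq> 0"
      "\<forall>y. vanishes_from n y \<longrightarrow> (\<forall>b\<in>K. y b = 0) \<longrightarrow> mat_vec n E y = y"
      "mat_vec n E x' = (\<lambda>c. if c \<in> K then coord_vec k v c else x' c)"
      "\<forall>g. (\<forall>c\<in>K. g dvd x' c) \<longleftrightarrow> g dvd v"
      using less.hyps[OF smaller] by blast
    have "mat_vec n (mat_mult n E T) y = y" if "vanishes_from n y" "\<forall>c\<in>K. y c = 0" for y
      using that IH(4) T(2)[OF that(1)] ab by (simp add: mat_vec_mult fun_upd_idem)
    moreover have "mat_vec n (mat_mult n E T) x = (\<lambda>c. if c \<in> K then coord_vec k v c else x c)"
      using IH(5) T(2)[OF less.prems(1)] ab by (auto simp: mat_vec_mult x'_def)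
    moreover have "(\<forall>c\<in>K. g dvd x c) \<longleftrightarrow> g dvd v" for g
      using dvd_all_update_add_mult[OF ab(2,3)] IH(6) by (simp add: x'_def)
    ultimately show ?thesis using inverse_mats_mult[OF T(1) IH(1)] IH(2,3) by blast
  qed
qed

text \<open>Adding an index that the current gcd does not divide strictly lowers the gcd, so at most
  \<open>\<bar>d k0\<bar>\<close> indices are needed.\<close>

lemma gcd_preserving_subset_aux:
  fixes d :: "nat \<Rightarrow> int"
  assumes "finite S" "k0 \<in> S" "d k0 \<noteq> 0"
    and "K \<subseteq> S" "k0 \<in> K" "card K + nat (Gcd (d ` K)) \<le> nat \<bar>d k0\<bar> + 1"
  shows "\<exists>K'\<subseteq>S. k0 \<in> K' \<and> card K' \<le> nat \<bar>d k0\<bar> \<and>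
           (\<forall>g. (\<forall>b\<in>K'. g dvd d b) \<longrightarrow> (\<forall>b\<in>S. g dvd d b))"
  using assms(4-6)
proof (induction "nat (Gcd (d ` K))" arbitrary: K rule: less_induct)
  case less
  let ?g = "Gcd (d ` K)"
  have "?g \<noteq> 0" using less.prems(2) assms(3) by auto
  then have g_pos: "?g > 0" using Gcd_int_greater_eq_0[of "d ` K"] by linarith
  show ?case
  proof (cases "\<forall>b\<in>S. ?g dvd d b")
    case True
    have "card K \<le> nat \<bar>d k0\<bar>" using less.prems(3) g_pos by linarith
    moreover have "(\<forall>b\<in>S. g dvd d b)" if "\<forall>b\<in>K. g dvd d b" for g
      using that True Gcd_greatest[of "d ` K" g] dvd_trans by blast
    ultimately show ?thesis using less.prems by blast
  next
    case False
    then obtain b where b: "b \<in> S" "\<not> ?g dvd d b" by blast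
    then have "b \<notin> K" by (meson Gcd_dvd image_eqI)
    moreover have "finite K" using less.prems(1) assms(1) finite_subset by blast
    ultimately have card_insert: "card (insert b K) = card K + 1" by simp
    have "gcd (d b) ?g \<noteq> ?g" using b(2) by (metis gcd_dvd1)
    moreover have "gcd (d b) ?g \<le> ?g" using g_pos by (simp add: zdvd_imp_le)
    ultimately have "gcd (d b) ?g < ?g" by linarith
    then have smaller: "nat (Gcd (d ` insert b K)) < nat ?g" using g_pos by simp
    moreover have "card (insert b K) + nat (Gcd (d ` insert b K)) \<le> nat \<bar>d k0\<bar> + 1"
      using less.prems(3) card_insert smaller by linarith
    ultimately show ?thesis using less.hyps[of "insert b K"] less.prems b(1) by blast
  qed
qed

lemma gcd_preserving_subset:
  fixes d :: "nat \<Rightarrow> int"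
  assumes "finite S" "k0 \<in> S" "d k0 \<noteq> 0"
  shows "\<exists>K\<subseteq>S. k0 \<in> K \<and> card K \<le> nat \<bar>d k0\<bar> \<and>
           (\<forall>g. (\<forall>b\<in>K. g dvd d b) \<longrightarrow> (\<forall>b\<in>S. g dvd d b))"
  using gcd_preserving_subset_aux[of S k0 d "{k0}"] assms by simp

lemma move_to_coord_vec:
  assumes y: "vanishes_from n y" and "k < n" "m < n" "y k \<noteq> 0" "\<forall>b. y k dvd y b"
  shows "\<exists>W W'. inverse_mats n W W' \<and> mat_vec n W y = coord_vec m \<bar>y k\<bar> \<and>
     (\<forall>z. vanishes_from n z \<longrightarrow> z k = 0 \<longrightarrow> z m = 0 \<longrightarrow> mat_vec n W z = z)"
proof -
  define w where "w = \<bar>y k\<bar>"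
  define F where "F = (if y k < 0 then sign_flip k else mat_one)"
  have inv_F: "inverse_mats n F F" by (simp add: F_def inverse_mats_sign_flip inverse_mats_one)
  have F_apply: "mat_vec n F z = (if y k < 0 then z(k := - z k) else z)"
    if "vanishes_from n z" for z
    using mat_vec_sign_flip[OF \<open>k < n\<close> that] mat_vec_one[OF that] by (simp add: F_def)
  define y' where "y' = mat_vec n F y"
  have y'_k: "y' k = w" and w_dvd: "w dvd y' b" for b
    using F_apply[OF y] assms(5) by (auto simp: y'_def w_def)
  define r where "r = (\<lambda>b. if b = k then 0 else - (y' b div w))"
  define T where "T = transvection k r"
  have "vanishes_from n y'" unfolding y'_def by (rule vanishes_from_mat_vec)
  then have "vanishes_from n r" by (auto simp: vanishes_from_def r_def)
  then have T_apply: "mat_vec n T z = (\<lambda>a. z a + z k * r a)" if "vanishes_from n z" for z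
    using mat_vec_transvection[OF \<open>k < n\<close> that] by (simp add: T_def)
  have inv_T: "inverse_mats n T (transvection k (\<lambda>a. - r a))"
    unfolding T_def using \<open>k < n\<close> by (intro inverse_mats_transvection) (simp_all add: r_def)
  have "mat_vec n T y' = coord_vec k w"
    using T_apply[OF \<open>vanishes_from n y'\<close>] y'_k w_dvd by (auto simp: r_def)
  moreover have "vanishes_from n (coord_vec k w)" using \<open>k < n\<close> by (simp add: vanishes_from_def)
  ultimately have "mat_vec n (coord_swap k m) (mat_vec n T y') = coord_vec m w"
    using mat_vec_coord_swap[OF \<open>k < n\<close> \<open>m < n\<close>] by (auto simp: swap_index_def)
  moreover have "mat_vec n (coord_swap k m) (mat_vec n T (mat_vec n F z)) = z"
    if "vanishes_from n z" "z k = 0" "z m = 0" for z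
    using that F_apply T_apply mat_vec_coord_swap[OF \<open>k < n\<close> \<open>m < n\<close> that(1)]
    by (auto simp: swap_index_def fun_upd_idem)
  moreover have "inverse_mats n (mat_mult n (coord_swap k m) (mat_mult n T F))
      (mat_mult n (mat_mult n F (transvection k (\<lambda>a. - r a))) (coord_swap k m))"
    using inverse_mats_coord_swap[OF \<open>k < n\<close> \<open>m < n\<close>]
    by (intro inverse_mats_mult[OF inverse_mats_mult[OF inv_F inv_T]])
  ultimately show ?thesis unfolding w_def y'_def by (metis mat_vec_mult)
qed

lemma pivot_step:
  assumes x: "vanishes_from n x" and low: "\<forall>k<m. x k = 0" and "x k0 \<noteq> 0"
    and bound: "\<forall>k. \<bar>x k\<bar> \<le> int c"
  obtains W W' T w where "inverse_mats n W W'" "m < n" "finite T" "card T \<le> c + 1" "\<forall>b\<in>T. m \<le> b"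
    "w > 0" "mat_vec n W x = coord_vec m w"
    "\<forall>y. vanishes_from n y \<longrightarrow> (\<forall>b\<in>T. y b = 0) \<longrightarrow> mat_vec n W y = y" "m \<in> T"
proof -
  define S where "S = {k. k < n \<and> x k \<noteq> 0}"
  have "k0 \<in> S" using \<open>x k0 \<noteq> 0\<close> x by (auto simp: S_def vanishes_from_def not_less[symmetric])
  then obtain K where K: "K \<subseteq> S" "k0 \<in> K" "card K \<le> nat \<bar>x k0\<bar>"
    "\<forall>g. (\<forall>b\<in>K. g dvd x b) \<longrightarrow> (\<forall>b\<in>S. g dvd x b)"
    using gcd_preserving_subset[of S k0 x] \<open>x k0 \<noteq> 0\<close> by (auto simp: S_def)
  have fin_K: "finite K" using K(1) by (rule finite_subset) (simp add: S_def)
  have K_range: "m \<le> b \<and> b < n" if "b \<in> K" for b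
  proof -
    have "b < n" "x b \<noteq> 0" using K(1) that by (auto simp: S_def)
    then show ?thesis using low by (meson not_le)
  qed
  have "card K \<le> c" using K(3) bound[rule_format, of k0] by linarith
  obtain E E' k v where E: "inverse_mats n E E'" "k \<in> K" "v \<noteq> 0"
    "\<forall>y. vanishes_from n y \<longrightarrow> (\<forall>b\<in>K. y b = 0) \<longrightarrow> mat_vec n E y = y"
    "mat_vec n E x = (\<lambda>b. if b \<in> K then coord_vec k v b else x b)"
    "\<forall>g. (\<forall>b\<in>K. g dvd x b) \<longleftrightarrow> g dvd v"
    using euclid_reduction[OF fin_K _ x] K(2) \<open>x k0 \<noteq> 0\<close> K_range by blast
  define y where "y = mat_vec n E x"
  have y_k: "y k = v" using E(2,5) by (simp add: y_def)
  have "v dvd x b" for b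
    using K(4) E(6) x by (cases "b \<in> S") (auto simp: S_def vanishes_from_def)
  then have "\<forall>b. y k dvd y b" using E(2,5) by (simp add: y_def)
  moreover have "k < n" "m \<le> k" using K_range E(2) by auto
  moreover have "vanishes_from n y" unfolding y_def by (rule vanishes_from_mat_vec)
  ultimately obtain W W' where W: "inverse_mats n W W'" "mat_vec n W y = coord_vec m \<bar>v\<bar>"
    "\<forall>z. vanishes_from n z \<longrightarrow> z k = 0 \<longrightarrow> z m = 0 \<longrightarrow> mat_vec n W z = z"
    using move_to_coord_vec[of n y k m] y_k E(3) by auto
  have "mat_vec n (mat_mult n W E) z = z"
    if "vanishes_from n z" "\<forall>b\<in>insert m K. z b = 0" for z
    using that E(2,4) W(3) by (simp add: mat_vec_mult)
  moreover have "mat_vec n (mat_mult n W E) x = coord_vec m \<bar>v\<bar>"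
    using W(2) by (simp add: mat_vec_mult y_def)
  moreover have "card (insert m K) \<le> c + 1" using fin_K \<open>card K \<le> c\<close> by (simp add: card_insert_if)
  ultimately show thesis
    using inverse_mats_mult[OF E(1) W(1)] fin_K E(3) K_range \<open>k < n\<close> \<open>m \<le> k\<close>
    by (intro that[of "mat_mult n W E" "mat_mult n E' W'" "insert m K" "\<bar>v\<bar>"]) auto
qed

section \<open>Greedy pivoting of sparse integer vectors\<close>

definition pivots :: "nat \<Rightarrow> int_mat \<Rightarrow> ('j \<Rightarrow> int_vec) \<Rightarrow> nat \<Rightarrow> (nat \<Rightarrow> 'j) \<Rightarrow> (nat \<Rightarrow> int) \<Rightarrow> bool"
  where "pivots n U d i js g \<longleftrightarrow>
    inj_on js {..<i} \<and> (\<forall>m<i. g m > 0 \<and> mat_vec n U (d (js m)) = coord_vec m (g m))"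

lemma pivots_le: "pivots n U d i js g \<Longrightarrow> i \<le> n"
proof (rule ccontr)
  assume "pivots n U d i js g" "\<not> i \<le> n"
  then have "mat_vec n U (d (js n)) n = g n" "g n > 0" by (auto simp: pivots_def)
  then show False by (simp add: mat_vec_def)
qed

lemma pivots_extend:
  assumes piv: "pivots n U d m js g" and "mat_vec n U (d j) = d j" "j \<notin> js ` {..<m}"
    and "mat_vec n W (d j) = coord_vec m w" "w > 0" "m < n"
    and fix_W: "\<forall>y. vanishes_from n y \<longrightarrow> (\<forall>b\<ge>m. y b = 0) \<longrightarrow> mat_vec n W y = y"
  shows "pivots n (mat_mult n W U) d (Suc m) (js(m := j)) (g(m := w))"
proof -
  have fix_low: "mat_vec n W (coord_vec m' v) = coord_vec m' v" if "m' < m" for m' v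
    using fix_W[rule_format, of "coord_vec m' v"] that \<open>m < n\<close> by (auto simp: vanishes_from_def)
  have "inj_on (js(m := j)) {..<Suc m}"
    using piv assms(3) by (auto simp: pivots_def inj_on_def lessThan_Suc less_Suc_eq)
  moreover have "mat_vec n (mat_mult n W U) (d ((js(m := j)) m')) = coord_vec m' ((g(m := w)) m')"
    if "m' < Suc m" for m'
    using that piv fix_low assms(2,4) by (cases "m' = m") (auto simp: mat_vec_mult pivots_def)
  ultimately show ?thesis using piv \<open>w > 0\<close> by (auto simp: pivots_def less_Suc_eq)
qed

lemma card_le_card_untouched:
  fixes d :: "'j \<Rightarrow> int_vec"
  assumes "finite J" "R \<subseteq> J" "j \<in> R" "finite T" "card T \<le> c + 1"
    and col: "\<forall>k. card {j\<in>J. d j k \<noteq> 0} \<le> c"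
  shows "card R \<le> card {j'\<in>R. j' \<noteq> j \<and> (\<forall>b\<in>T. d j' b = 0)} + (1 + (c + 1) * c)"
proof -
  define X where "X = (\<Union>b\<in>T. {j'\<in>J. d j' b \<noteq> 0})"
  have "card X \<le> (\<Sum>b\<in>T. card {j'\<in>J. d j' b \<noteq> 0})"
    unfolding X_def using assms(4) by (intro card_UN_le)
  also have "\<dots> \<le> (\<Sum>b\<in>T. c)" using col by (intro sum_mono) auto
  also have "\<dots> = card T * c" by simp
  also have "\<dots> \<le> (c + 1) * c" using assms(5) by (rule mult_le_mono1)
  finally have card_X: "card X \<le> (c + 1) * c" .
  have "X \<subseteq> J" by (auto simp: X_def)
  then have "finite X" using assms(1) by (rule finite_subset)
  let ?R' = "{j'\<in>R. j' \<noteq> j \<and> (\<forall>b\<in>T. d j' b = 0)}"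
  have "card R \<le> card (?R' \<union> insert j X)"
    using assms(1,2) \<open>finite X\<close> by (intro card_mono) (auto simp: X_def intro: finite_subset)
  also have "\<dots> \<le> card ?R' + card (insert j X)" by (rule card_Un_le)
  also have "\<dots> \<le> card ?R' + (1 + card X)" using \<open>finite X\<close> by (simp add: card_insert_if)
  finally show ?thesis using card_X by linarith
qed

definition greedy_invariant :: "nat \<Rightarrow> ('j \<Rightarrow> int_vec) \<Rightarrow> 'j set \<Rightarrow> 'j set \<Rightarrow> nat \<Rightarrow> int_mat \<Rightarrow> int_mat \<Rightarrow>
    (nat \<Rightarrow> 'j) \<Rightarrow> (nat \<Rightarrow> int) \<Rightarrow> bool"
  where "greedy_invariant n d J R m U V js g \<longleftrightarrow>
    R \<subseteq> J \<and> (\<forall>j\<in>R. \<forall>k<m. d j k = 0) \<and> (\<forall>j\<in>R. mat_vec n U (d j) = d j) \<and>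
    inverse_mats n U V \<and> pivots n U d m js g \<and> js ` {..<m} \<subseteq> J - R"

text \<open>Pivoting on one vector disturbs only the vectors meeting the at most \<open>c + 1\<close> coordinates
  touched by the pivot step, and there are at most \<open>(c + 1) c\<close> of them; the greedy procedure
  therefore finds one pivot per \<open>1 + (c + 1) c\<close> vectors.\<close>

lemma greedy_step:
  fixes d :: "'j \<Rightarrow> int_vec"
  assumes vecs: "\<forall>j\<in>J. vanishes_from n (d j) \<and> d j \<noteq> (\<lambda>_. 0) \<and> (\<forall>k. \<bar>d j k\<bar> \<le> int c)"
    and col: "\<forall>k. card {j\<in>J. d j k \<noteq> 0} \<le> c" and "finite J"
    and inv: "greedy_invariant n d J R m U V js g" and "j \<in> R"
  obtains R' U' V' js' g' where "greedy_invariant n d J R' (Suc m) U' V' js' g'" "card R' < card R"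
    "card R \<le> card R' + (1 + (c + 1) * c)"
proof -
  have R: "R \<subseteq> J" "\<forall>j\<in>R. \<forall>k<m. d j k = 0" "\<forall>j\<in>R. mat_vec n U (d j) = d j"
    "inverse_mats n U V" "pivots n U d m js g" "js ` {..<m} \<subseteq> J - R"
    using inv by (simp_all add: greedy_invariant_def)
  have j: "j \<in> J" "vanishes_from n (d j)" "d j \<noteq> (\<lambda>_. 0)" "\<forall>k. \<bar>d j k\<bar> \<le> int c"
    using vecs R(1) \<open>j \<in> R\<close> by auto
  obtain k0 where "d j k0 \<noteq> 0" using j(3) by auto
  have "\<forall>k<m. d j k = 0" using R(2) \<open>j \<in> R\<close> by blast
  obtain W W' T w where W: "inverse_mats n W W'" "m < n" "finite T" "card T \<le> c + 1"
    "\<forall>b\<in>T. m \<le> b" "w > 0" "mat_vec n W (d j) = coord_vec m w"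
    "\<forall>y. vanishes_from n y \<longrightarrow> (\<forall>b\<in>T. y b = 0) \<longrightarrow> mat_vec n W y = y" "m \<in> T"
    by (rule pivot_step[OF j(2) \<open>\<forall>k<m. d j k = 0\<close> \<open>d j k0 \<noteq> 0\<close> j(4)])
  define R' where "R' = {j'\<in>R. j' \<noteq> j \<and> (\<forall>b\<in>T. d j' b = 0)}"
  have "card R' < card R"
    using \<open>j \<in> R\<close> R(1) \<open>finite J\<close> by (intro psubset_card_mono)
      (auto simp: R'_def intro: finite_subset)
  moreover have "card R \<le> card R' + (1 + (c + 1) * c)"
    unfolding R'_def using \<open>finite J\<close> R(1) \<open>j \<in> R\<close> W(3,4) col by (rule card_le_card_untouched)
  moreover have "\<forall>j'\<in>R'. mat_vec n (mat_mult n W U) (d j') = d j'"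
  proof
    fix j' assume "j' \<in> R'"
    then have "vanishes_from n (d j')" "mat_vec n U (d j') = d j'" "\<forall>b\<in>T. d j' b = 0"
      using R(1,3) vecs by (auto simp: R'_def)
    then show "mat_vec n (mat_mult n W U) (d j') = d j'" using W(8) by (simp add: mat_vec_mult)
  qed
  moreover have "pivots n (mat_mult n W U) d (Suc m) (js(m := j)) (g(m := w))"
  proof (rule pivots_extend[OF R(5) _ _ W(7,6,2)])
    show "mat_vec n U (d j) = d j" using R(3) \<open>j \<in> R\<close> by blast
    show "j \<notin> js ` {..<m}" using R(6) \<open>j \<in> R\<close> by blast
    show "\<forall>y. vanishes_from n y \<longrightarrow> (\<forall>b\<ge>m. y b = 0) \<longrightarrow> mat_vec n W y = y"
      using W(5,8) by simp
  qed
  moreover have "R' \<subseteq> J" "\<forall>j'\<in>R'. \<forall>k<Suc m. d j' k = 0" "(js(m := j)) ` {..<Suc m} \<subseteq> J - R'"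
    using R(1,2,6) W(9) j(1) by (auto simp: R'_def less_Suc_eq lessThan_Suc)
  ultimately show thesis
    using that[of R' "mat_mult n W U" "mat_mult n V W'" "js(m := j)" "g(m := w)"]
      inverse_mats_mult[OF R(4) W(1)] by (simp add: greedy_invariant_def)
qed

lemma greedy_pivots_aux:
  fixes d :: "'j \<Rightarrow> int_vec"
  assumes "\<forall>j\<in>J. vanishes_from n (d j) \<and> d j \<noteq> (\<lambda>_. 0) \<and> (\<forall>k. \<bar>d j k\<bar> \<le> int c)"
    and "\<forall>k. card {j\<in>J. d j k \<noteq> 0} \<le> c" and "finite J"
    and "greedy_invariant n d J R m U V js g"
  shows "\<exists>i js' g' U' V'. card R + m * (1 + (c + 1) * c) \<le> i * (1 + (c + 1) * c) \<and> i \<le> n \<and>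
    inverse_mats n U' V' \<and> js' ` {..<i} \<subseteq> J \<and> pivots n U' d i js' g'"
  using assms(4)
proof (induction "card R" arbitrary: R m U V js g rule: less_induct)
  case less
  show ?case
  proof (cases "R = {}")
    case True
    then show ?thesis using less.prems pivots_le[of n U d m js g]
      by (intro exI[of _ m] exI[of _ js] exI[of _ g] exI[of _ U] exI[of _ V])
        (auto simp: greedy_invariant_def)
  next
    case False
    then obtain j where "j \<in> R" by blast
    obtain R' U' V' js' g' where step: "greedy_invariant n d J R' (Suc m) U' V' js' g'"
      "card R' < card R" "card R \<le> card R' + (1 + (c + 1) * c)"
      by (rule greedy_step[OF assms(1-3) less.prems \<open>j \<in> R\<close>])
    obtain i js'' g'' U'' V'' where
      "card R' + Suc m * (1 + (c + 1) * c) \<le> i * (1 + (c + 1) * c)" "i \<le> n"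
      "inverse_mats n U'' V''" "js'' ` {..<i} \<subseteq> J" "pivots n U'' d i js'' g''"
      using less.hyps[OF step(2,1)] by blast
    then show ?thesis using step(3)
      by (intro exI[of _ i] exI[of _ js''] exI[of _ g''] exI[of _ U''] exI[of _ V'']) auto
  qed
qed

lemma greedy_pivots:
  fixes d :: "'j \<Rightarrow> int_vec"
  assumes "\<forall>j\<in>J. vanishes_from n (d j) \<and> d j \<noteq> (\<lambda>_. 0) \<and> (\<forall>k. \<bar>d j k\<bar> \<le> int c)"
    and "\<forall>k. card {j\<in>J. d j k \<noteq> 0} \<le> c" and "finite J"
  shows "\<exists>i js g U V. card J \<le> i * (1 + (c + 1) * c) \<and> i \<le> n \<and>
    inverse_mats n U V \<and> js ` {..<i} \<subseteq> J \<and> pivots n U d i js g"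
proof -
  have "greedy_invariant n d J J 0 mat_one mat_one js g" for js g
    using assms(1) mat_vec_one inverse_mats_one by (simp add: greedy_invariant_def pivots_def)
  then show ?thesis using greedy_pivots_aux[OF assms] by fastforce
qed

section \<open>Convex hulls and Minkowski sums\<close>

lemma mem_conv_fin: assumes "finite S" "s \<in> S" shows "s \<in> conv_fin S"
proof -
  have "(\<lambda>k. \<Sum>y\<in>S. (if y = s then 1 else 0) * y k) = s"
    using assms by (simp add: if_distrib[of "\<lambda>u. u * _"] sum.delta cong: if_cong)
  moreover have "(\<Sum>y\<in>S. (if y = s then 1 else 0)::real) = 1" using assms by (simp add: sum.delta)
  ultimately show ?thesis unfolding conv_fin_def
    by (intro CollectI exI[of _ "\<lambda>y. if y = s then 1 else 0"]) auto
qed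

lemma conv_fin_convex:
  assumes "x \<in> conv_fin S" "y \<in> conv_fin S" "0 \<le> t" "t \<le> 1"
  shows "(\<lambda>k. (1 - t) * x k + t * y k) \<in> conv_fin S"
proof -
  obtain u where u: "\<forall>z\<in>S. 0 \<le> u z" "(\<Sum>z\<in>S. u z) = 1" "x = (\<lambda>k. \<Sum>z\<in>S. u z * z k)"
    using assms(1) by (auto simp: conv_fin_def)
  obtain v where v: "\<forall>z\<in>S. 0 \<le> v z" "(\<Sum>z\<in>S. v z) = 1" "y = (\<lambda>k. \<Sum>z\<in>S. v z * z k)"
    using assms(2) by (auto simp: conv_fin_def)
  show ?thesis unfolding conv_fin_def
  proof (rule CollectI, rule exI[of _ "\<lambda>z. (1 - t) * u z + t * v z"], intro conjI)
    show "\<forall>z\<in>S. 0 \<le> (1 - t) * u z + t * v z" using u v assms(3,4) by auto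
    show "(\<Sum>z\<in>S. (1 - t) * u z + t * v z) = 1"
      using u v by (simp add: sum.distrib sum_distrib_left[symmetric])
    show "(\<lambda>k. (1 - t) * x k + t * y k) = (\<lambda>k. \<Sum>z\<in>S. ((1 - t) * u z + t * v z) * z k)"
      using u(3) v(3) by (simp add: sum.distrib sum_distrib_left distrib_right mult.assoc)
  qed
qed

lemma conv_fin_singleton: "conv_fin {a} = {a}"
  by (auto simp: conv_fin_def intro!: exI[of _ "\<lambda>_. 1"])

lemma conv_fin_pair:
  assumes "x \<in> conv_fin {a, b}"
  obtains \<theta> where "0 \<le> \<theta>" "\<theta> \<le> 1" "x = (\<lambda>k. a k + \<theta> * (b k - a k))"
proof (cases "a = b")
  case True
  then show thesis using assms conv_fin_singleton that[of 0] by auto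
next
  case False
  obtain u where u: "\<forall>z\<in>{a,b}. 0 \<le> u z" "(\<Sum>z\<in>{a,b}. u z) = 1" "x = (\<lambda>k. \<Sum>z\<in>{a,b}. u z * z k)"
    using assms by (auto simp: conv_fin_def)
  have ua: "u a = 1 - u b" using u(2) False by simp
  have "x = (\<lambda>k. u a * a k + u b * b k)" using u(3) False by simp
  then have "x = (\<lambda>k. a k + u b * (b k - a k))" unfolding ua by (simp add: fun_eq_iff algebra_simps)
  then show thesis using that[of "u b"] u(1,2) False by auto
qed

lemma mem_msum: "x \<in> msum A B \<longleftrightarrow> (\<exists>p\<in>A. \<exists>y\<in>B. x = (\<lambda>k. p k + y k))"
  by (auto simp: msum_def)

lemma msum_list_iff:
  "x \<in> msum_list Ps \<longleftrightarrow> (\<exists>f. (\<forall>j<length Ps. f j \<in> Ps ! j) \<and> x = (\<lambda>k. \<Sum>j<length Ps. f j k))"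
proof (induction Ps arbitrary: x)
  case Nil
  then show ?case by (simp add: msum_list_def)
next
  case (Cons P Ps)
  have "x \<in> msum_list (P # Ps) \<longleftrightarrow> (\<exists>p\<in>P. \<exists>y\<in>msum_list Ps. x = (\<lambda>k. p k + y k))"
    by (simp add: msum_list_def mem_msum)
  also have "\<dots> \<longleftrightarrow>
      (\<exists>p\<in>P. \<exists>f. (\<forall>j<length Ps. f j \<in> Ps ! j) \<and> x = (\<lambda>k. p k + (\<Sum>j<length Ps. f j k)))"
    by (simp only: Bex_def Cons.IH) blast
  also have "\<dots> \<longleftrightarrow> (\<exists>f. (\<forall>j<length (P # Ps). f j \<in> (P # Ps) ! j) \<and>
      x = (\<lambda>k. \<Sum>j<length (P # Ps). f j k))"
  proof
    assume "\<exists>p\<in>P. \<exists>f. (\<forall>j<length Ps. f j \<in> Ps ! j) \<and> x = (\<lambda>k. p k + (\<Sum>j<length Ps. f j k))"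
    then obtain p f where "p \<in> P" "\<forall>j<length Ps. f j \<in> Ps ! j"
      "x = (\<lambda>k. p k + (\<Sum>j<length Ps. f j k))" by blast
    then show "\<exists>f. (\<forall>j<length (P # Ps). f j \<in> (P # Ps) ! j) \<and> x = (\<lambda>k. \<Sum>j<length (P # Ps). f j k)"
      by (intro exI[of _ "case_nat p f"])
        (auto simp: less_Suc_eq_0_disj sum.lessThan_Suc_shift simp del: sum.lessThan_Suc)
  next
    assume "\<exists>f. (\<forall>j<length (P # Ps). f j \<in> (P # Ps) ! j) \<and> x = (\<lambda>k. \<Sum>j<length (P # Ps). f j k)"
    then obtain f where "\<forall>j<Suc (length Ps). f j \<in> (P # Ps) ! j"
      "x = (\<lambda>k. \<Sum>j<Suc (length Ps). f j k)"
      by auto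
    then show "\<exists>p\<in>P. \<exists>f. (\<forall>j<length Ps. f j \<in> Ps ! j) \<and> x = (\<lambda>k. p k + (\<Sum>j<length Ps. f j k))"
      by (intro bexI[of _ "f 0"] exI[of _ "\<lambda>j. f (Suc j)"])
        (auto simp: sum.lessThan_Suc_shift simp del: sum.lessThan_Suc)
  qed
  finally show ?case .
qed

lemma conv_fin_weighted_image:
  assumes "finite A" "finite S" "g ` A \<subseteq> S" "\<forall>p\<in>A. 0 \<le> W p" "(\<Sum>p\<in>A. W p) = 1"
  shows "(\<lambda>k. \<Sum>p\<in>A. W p * g p k) \<in> conv_fin S"
proof -
  define u where "u = (\<lambda>s. \<Sum>p\<in>{p. p \<in> A \<and> g p = s}. W p)"
  have "\<forall>s\<in>S. 0 \<le> u s" using assms(4) by (auto simp: u_def intro!: sum_nonneg)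
  moreover have "(\<Sum>s\<in>S. u s) = 1"
    unfolding u_def using sum.group[OF assms(1,2,3), of W] assms(5) by simp
  moreover have "(\<Sum>s\<in>S. u s * s k) = (\<Sum>p\<in>A. W p * g p k)" for k
  proof -
    have "(\<Sum>s\<in>S. u s * s k) = (\<Sum>s\<in>S. \<Sum>p\<in>{p. p \<in> A \<and> g p = s}. W p * g p k)"
      unfolding u_def sum_distrib_right by (intro sum.cong refl) auto
    also have "\<dots> = (\<Sum>p\<in>A. W p * g p k)" by (rule sum.group[OF assms(1,2,3)])
    finally show ?thesis .
  qed
  ultimately show ?thesis unfolding conv_fin_def by (intro CollectI exI[of _ u]) auto
qed

lemma msum_conv_fin_subset:
  assumes S: "finite S" and T: "finite T"
  shows "msum (conv_fin S) (conv_fin T) \<subseteq> conv_fin ((\<lambda>(s, t) k. s k + t k) ` (S \<times> T))"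
    (is "_ \<subseteq> conv_fin (?h ` (S \<times> T))")
proof
  fix z assume "z \<in> msum (conv_fin S) (conv_fin T)"
  then obtain u v where u: "\<forall>z\<in>S. 0 \<le> u z" "(\<Sum>z\<in>S. u z) = 1"
    and v: "\<forall>z\<in>T. 0 \<le> v z" "(\<Sum>z\<in>T. v z) = 1"
    and z: "z = (\<lambda>k. (\<Sum>s\<in>S. u s * s k) + (\<Sum>t\<in>T. v t * t k))"
    by (auto simp: msum_def conv_fin_def)
  define W where "W = (\<lambda>p. u (fst p) * v (snd p))"
  have "(\<Sum>p\<in>S \<times> T. W p) = (\<Sum>s\<in>S. \<Sum>t\<in>T. u s * v t)"
    by (simp add: sum.cartesian_product case_prod_beta W_def)
  also have "\<dots> = 1" using u(2) v(2) by (simp add: sum_product[symmetric])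
  finally have W1: "(\<Sum>p\<in>S \<times> T. W p) = 1" .
  have "(\<lambda>k. \<Sum>p\<in>S \<times> T. W p * ?h p k) \<in> conv_fin (?h ` (S \<times> T))"
    using S T u v by (intro conv_fin_weighted_image[OF _ _ _ _ W1]) (auto simp: W_def)
  moreover have "(\<Sum>p\<in>S \<times> T. W p * ?h p k) = z k" for k
  proof -
    have "(\<Sum>p\<in>S \<times> T. W p * ?h p k) = (\<Sum>s\<in>S. \<Sum>t\<in>T. u s * v t * (s k + t k))"
      by (simp add: sum.cartesian_product W_def case_prod_beta)
    also have "\<dots> = (\<Sum>s\<in>S. u s * s k * (\<Sum>t\<in>T. v t)) + (\<Sum>s\<in>S. u s * (\<Sum>t\<in>T. v t * t k))"
      by (simp add: algebra_simps sum.distrib sum_distrib_left sum_distrib_right)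
    also have "\<dots> = z k" using u(2) v(2) z by (simp add: sum_distrib_right[symmetric])
    finally show ?thesis .
  qed
  ultimately show "z \<in> conv_fin (?h ` (S \<times> T))" by simp
qed

lemma conv_fin_sums_subset_msum:
  assumes S: "finite S" and T: "finite T"
  shows "conv_fin ((\<lambda>(s, t) k. s k + t k) ` (S \<times> T)) \<subseteq> msum (conv_fin S) (conv_fin T)"
    (is "conv_fin (?h ` (S \<times> T)) \<subseteq> _")
proof
  fix z assume "z \<in> conv_fin (?h ` (S \<times> T))"
  then obtain W where W: "\<forall>p\<in>?h ` (S \<times> T). 0 \<le> W p" "(\<Sum>p\<in>?h ` (S \<times> T). W p) = 1"
    "z = (\<lambda>k. \<Sum>p\<in>?h ` (S \<times> T). W p * p k)"
    by (auto simp: conv_fin_def)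
  define A where "A = ?h ` (S \<times> T)"
  have "finite A" using S T by (simp add: A_def)
  define \<sigma> where "\<sigma> = (\<lambda>p. SOME q. q \<in> S \<times> T \<and> ?h q = p)"
  have \<sigma>: "\<sigma> p \<in> S \<times> T \<and> ?h (\<sigma> p) = p" if "p \<in> A" for p
    unfolding \<sigma>_def by (rule someI_ex) (use that in \<open>auto simp: A_def\<close>)
  have WA: "\<forall>p\<in>A. 0 \<le> W p" "(\<Sum>p\<in>A. W p) = 1" using W(1,2) by (simp_all add: A_def)
  have "(\<lambda>k. \<Sum>p\<in>A. W p * (fst \<circ> \<sigma>) p k) \<in> conv_fin S"
    using \<sigma> by (intro conv_fin_weighted_image[OF \<open>finite A\<close> S _ WA]) (auto simp: mem_Times_iff)
  moreover have "(\<lambda>k. \<Sum>p\<in>A. W p * (snd \<circ> \<sigma>) p k) \<in> conv_fin T"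
    using \<sigma> by (intro conv_fin_weighted_image[OF \<open>finite A\<close> T _ WA]) (auto simp: mem_Times_iff)
  moreover have "z k = (\<Sum>p\<in>A. W p * (fst \<circ> \<sigma>) p k) + (\<Sum>p\<in>A. W p * (snd \<circ> \<sigma>) p k)" for k
  proof -
    have "z k = (\<Sum>p\<in>A. W p * ?h (\<sigma> p) k)" using W(3) \<sigma> by (auto simp: A_def intro!: sum.cong)
    then show ?thesis by (simp add: case_prod_beta distrib_left sum.distrib)
  qed
  ultimately show "z \<in> msum (conv_fin S) (conv_fin T)" unfolding mem_msum by (auto intro!: bexI)
qed

lemma msum_conv_fin:
  "finite S \<Longrightarrow> finite T \<Longrightarrow>
    msum (conv_fin S) (conv_fin T) = conv_fin ((\<lambda>(s, t) k. s k + t k) ` (S \<times> T))"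
  by (intro subset_antisym msum_conv_fin_subset conv_fin_sums_subset_msum)

lemma lattice_polytope_msum:
  assumes "lattice_polytope n A" "lattice_polytope n B"
  shows "lattice_polytope n (msum A B)"
proof -
  obtain S where S: "finite S" "S \<noteq> {}" "\<forall>x\<in>S. in_lattice n x" "A = conv_fin S"
    using assms(1) by (auto simp: lattice_polytope_def)
  obtain T where T: "finite T" "T \<noteq> {}" "\<forall>x\<in>T. in_lattice n x" "B = conv_fin T"
    using assms(2) by (auto simp: lattice_polytope_def)
  have "\<forall>x\<in>(\<lambda>(s, t) k. s k + t k) ` (S \<times> T). in_lattice n x"
    using S(3) T(3) by (auto simp: in_lattice_def)
  then show ?thesis unfolding lattice_polytope_def S(4) T(4) msum_conv_fin[OF S(1) T(1)]
    using S(1,2) T(1,2) by (intro exI[of _ "(\<lambda>(s, t) k. s k + t k) ` (S \<times> T)"]) auto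
qed

lemma lattice_polytope_msum_list:
  "\<forall>Q\<in>set Ps. lattice_polytope n Q \<Longrightarrow> lattice_polytope n (msum_list Ps)"
proof (induction Ps)
  case Nil
  have "lattice_polytope n (conv_fin {\<lambda>k. 0})" unfolding lattice_polytope_def
    by (intro exI[of _ "{\<lambda>k. 0}"]) (auto simp: in_lattice_def)
  then show ?case by (simp add: msum_list_def conv_fin_singleton)
next
  case (Cons P Ps)
  then show ?case using lattice_polytope_msum by (simp add: msum_list_def)
qed

definition in_box :: "nat \<Rightarrow> nat \<Rightarrow> (nat \<Rightarrow> real) set \<Rightarrow> bool" where
  "in_box n c X \<longleftrightarrow> (\<forall>x\<in>X. \<forall>j<n. 0 \<le> x j \<and> x j \<le> real c)"

definition minkowski_decomposition :: "nat \<Rightarrow> (nat \<Rightarrow> real) set \<Rightarrow> (nat \<Rightarrow> real) set list \<Rightarrow> bool"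
  where "minkowski_decomposition n P Ps \<longleftrightarrow>
    (\<forall>Q\<in>set Ps. lattice_polytope n Q \<and> pos_dim Q) \<and> P = msum_list Ps"

lemma lattice_polytope_two_points:
  assumes "lattice_polytope n Q" "pos_dim Q"
  obtains s t where "s \<in> Q" "t \<in> Q" "in_lattice n s" "in_lattice n t" "s \<noteq> t"
proof -
  obtain S where S: "finite S" "S \<noteq> {}" "\<forall>x\<in>S. in_lattice n x" "Q = conv_fin S"
    using assms(1) by (auto simp: lattice_polytope_def)
  show thesis
  proof (cases "\<exists>s\<in>S. \<exists>t\<in>S. s \<noteq> t")
    case True
    then show thesis using S that mem_conv_fin by blast
  next
    case False
    then obtain s0 where "S = {s0}" using S(2) by blast
    then show thesis using assms(2) S(4) by (auto simp: pos_dim_def conv_fin_singleton)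
  qed
qed

lemma decomposition_lattice_points:
  assumes "\<forall>Q\<in>set Ps. lattice_polytope n Q \<and> pos_dim Q"
  obtains s t where "\<forall>j<length Ps. s j \<in> Ps ! j \<and> t j \<in> Ps ! j \<and>
    in_lattice n (s j) \<and> in_lattice n (t j) \<and> s j \<noteq> t j"
proof -
  let ?ok = "\<lambda>j p. j < length Ps \<longrightarrow> fst p \<in> Ps ! j \<and> snd p \<in> Ps ! j \<and>
    in_lattice n (fst p) \<and> in_lattice n (snd p) \<and> fst p \<noteq> snd p"
  have "\<forall>j. \<exists>p. ?ok j p"
  proof
    fix j
    show "\<exists>p. ?ok j p"
    proof (cases "j < length Ps")
      case True
      then obtain s t where "s \<in> Ps ! j" "t \<in> Ps ! j" "in_lattice n s" "in_lattice n t" "s \<noteq> t"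
        using assms lattice_polytope_two_points by (metis nth_mem)
      then show ?thesis by (intro exI[of _ "(s, t)"]) auto
    qed simp
  qed
  then obtain p where "\<forall>j. ?ok j (p j)" by (rule choice[THEN exE])
  then show thesis using that[of "fst \<circ> p" "snd \<circ> p"] by simp
qed

text \<open>The two points chosen in the summands can be combined independently: choosing in every
  summand the one with the larger (smaller) \<open>k\<close>-th coordinate gives a point of the sum, so the
  spreads add up to at most the width of the box.\<close>

lemma sum_spread_le_width:
  assumes box: "in_box n c (msum_list Ps)" and st: "\<forall>j<length Ps. s j \<in> Ps ! j \<and> t j \<in> Ps ! j"
    and "k < n"
  shows "(\<Sum>j<length Ps. \<bar>t j k - s j k\<bar>) \<le> real c"
proof -
  define hi where "hi = (\<lambda>j. if s j k \<le> t j k then t j else s j)"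
  define lo where "lo = (\<lambda>j. if s j k \<le> t j k then s j else t j)"
  have "(\<lambda>k. \<Sum>j<length Ps. hi j k) \<in> msum_list Ps"
    unfolding msum_list_iff using st by (intro exI[of _ hi]) (auto simp: hi_def)
  moreover have "(\<lambda>k. \<Sum>j<length Ps. lo j k) \<in> msum_list Ps"
    unfolding msum_list_iff using st by (intro exI[of _ lo]) (auto simp: lo_def)
  ultimately have "(\<Sum>j<length Ps. hi j k) \<le> real c" "0 \<le> (\<Sum>j<length Ps. lo j k)"
    using box \<open>k < n\<close> by (auto simp: in_box_def)
  moreover have "(\<Sum>j<length Ps. \<bar>t j k - s j k\<bar>) = (\<Sum>j<length Ps. hi j k - lo j k)"
    by (rule sum.cong) (auto simp: hi_def lo_def)
  moreover have "(\<Sum>j<length Ps. hi j k - lo j k) = (\<Sum>j<length Ps. hi j k) - (\<Sum>j<length Ps. lo j k)"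
    by (rule sum_subtractf)
  ultimately show ?thesis by linarith
qed

lemma length_decomposition_le:
  assumes box: "in_box n c P" and dec: "minkowski_decomposition n P Ps"
  shows "length Ps \<le> n * c"
proof -
  let ?L = "length Ps"
  obtain s t where st: "\<forall>j<?L. s j \<in> Ps ! j \<and> t j \<in> Ps ! j \<and>
      in_lattice n (s j) \<and> in_lattice n (t j) \<and> s j \<noteq> t j"
    using dec decomposition_lattice_points unfolding minkowski_decomposition_def by blast
  have one: "1 \<le> (\<Sum>k<n. \<bar>t j k - s j k\<bar>)" if "j < ?L" for j
  proof -
    have l: "in_lattice n (s j)" "in_lattice n (t j)" "s j \<noteq> t j" using st that by auto
    then obtain k where k: "s j k \<noteq> t j k" by (auto simp: fun_eq_iff)
    have "k < n"
    proof (rule ccontr)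
      assume "\<not> k < n"
      then have "s j k = 0" "t j k = 0" using l(1,2) by (auto simp: in_lattice_def)
      then show False using k by simp
    qed
    have "t j k - s j k \<in> \<int>" using l by (auto simp: in_lattice_def)
    then have "1 \<le> \<bar>t j k - s j k\<bar>" using k by (intro Ints_nonzero_abs_ge1) auto
    also have "\<dots> \<le> (\<Sum>k<n. \<bar>t j k - s j k\<bar>)" using \<open>k < n\<close> by (intro member_le_sum) auto
    finally show ?thesis .
  qed
  have "real ?L = (\<Sum>j<?L. 1)" by simp
  also have "\<dots> \<le> (\<Sum>j<?L. \<Sum>k<n. \<bar>t j k - s j k\<bar>)" using one by (intro sum_mono) simp
  also have "\<dots> = (\<Sum>k<n. \<Sum>j<?L. \<bar>t j k - s j k\<bar>)" by (rule sum.swap)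
  also have "\<dots> \<le> (\<Sum>k<n. real c)"
  proof (rule sum_mono)
    fix k assume "k \<in> {..<n}"
    moreover have "in_box n c (msum_list Ps)"
      using dec box by (simp add: minkowski_decomposition_def)
    ultimately show "(\<Sum>j<?L. \<bar>t j k - s j k\<bar>) \<le> real c"
      using st by (intro sum_spread_le_width) auto
  qed
  also have "\<dots> = real (n * c)" by simp
  finally show ?thesis by linarith
qed

text \<open>Inside a box all these lengths are bounded, which is what makes the \<open>GREATEST\<close> in their
  definitions attained.\<close>

lemma mink_length_altdef:
  "mink_length n P = (GREATEST l. l = 0 \<or> (\<exists>Ps. length Ps = l \<and> minkowski_decomposition n P Ps))"
  by (simp add: mink_length_def minkowski_decomposition_def)

lemma
  assumes "in_box n c P"
  shows mink_length_ge: "minkowski_decomposition n P Ps \<Longrightarrow> length Ps \<le> mink_length n P"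
    and mink_length_le: "mink_length n P \<le> n * c"
    and mink_length_attained: "mink_length n P \<noteq> 0 \<Longrightarrow>
      \<exists>Ps. length Ps = mink_length n P \<and> minkowski_decomposition n P Ps"
proof -
  let ?D = "\<lambda>l. l = 0 \<or> (\<exists>Ps. length Ps = l \<and> minkowski_decomposition n P Ps)"
  have bound: "\<And>l. ?D l \<Longrightarrow> l \<le> n * c" using length_decomposition_le[OF assms] by auto
  show "minkowski_decomposition n P Ps \<Longrightarrow> length Ps \<le> mink_length n P"
    unfolding mink_length_altdef by (rule Greatest_le_nat[of ?D, OF _ bound]) auto
  have "?D (mink_length n P)"
    unfolding mink_length_altdef by (rule GreatestI_nat[of ?D 0, OF _ bound]) auto
  then show "mink_length n P \<le> n * c" "mink_length n P \<noteq> 0 \<Longrightarrow>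
      \<exists>Ps. length Ps = mink_length n P \<and> minkowski_decomposition n P Ps"
    using bound by auto
qed

lemma
  assumes "in_box n c P"
  shows full_mink_length_ge:
      "lattice_polytope n Q \<Longrightarrow> Q \<subseteq> P \<Longrightarrow> mink_length n Q \<le> full_mink_length n P"
    and full_mink_length_attained: "lattice_polytope n P \<Longrightarrow>
      \<exists>Q. lattice_polytope n Q \<and> Q \<subseteq> P \<and> full_mink_length n P = mink_length n Q"
proof -
  let ?F = "\<lambda>k. \<exists>Q. lattice_polytope n Q \<and> Q \<subseteq> P \<and> k = mink_length n Q"
  have bound: "\<And>k. ?F k \<Longrightarrow> k \<le> n * c"
    using assms mink_length_le by (auto simp: in_box_def subset_iff)
  show "lattice_polytope n Q \<Longrightarrow> Q \<subseteq> P \<Longrightarrow> mink_length n Q \<le> full_mink_length n P"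
    unfolding full_mink_length_def by (rule Greatest_le_nat[of ?F, OF _ bound]) auto
  show "lattice_polytope n P \<Longrightarrow>
      \<exists>Q. lattice_polytope n Q \<and> Q \<subseteq> P \<and> full_mink_length n P = mink_length n Q"
    unfolding full_mink_length_def by (rule GreatestI_nat[of ?F, OF _ bound]) auto
qed

lemma unimodular_mat_one: "unimodular n mat_one"
  using inverse_mats_unimodular[OF inverse_mats_one] .

lemma cube_number_ge:
  assumes "i \<le> n" "unimodular n M" "\<forall>k\<ge>n. lam k = 0" "aff_map n M lam ` unit_cube i \<subseteq> P"
  shows "i \<le> cube_number n P"
  unfolding cube_number_def using assms by (intro Greatest_le_nat[of _ i n]) auto

lemma cube_number_attained:
  assumes "lattice_polytope n P"
  obtains M lam where "cube_number n P \<le> n" "unimodular n M" "\<forall>k\<ge>n. lam k = 0"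
    "aff_map n M lam ` unit_cube (cube_number n P) \<subseteq> P"
proof -
  obtain S where S: "finite S" "S \<noteq> {}" "\<forall>x\<in>S. in_lattice n x" "P = conv_fin S"
    using assms by (auto simp: lattice_polytope_def)
  then obtain s where "s \<in> P" "in_lattice n s" using mem_conv_fin by blast
  let ?C = "\<lambda>i. i \<le> n \<and> (\<exists>M lam. unimodular n M \<and> (\<forall>k\<ge>n. lam k = 0) \<and>
    aff_map n M lam ` unit_cube i \<subseteq> P)"
  define lam where "lam = (\<lambda>k. if k < n then \<lfloor>s k\<rfloor> else 0)"
  have "aff_map n mat_one lam x = s" if "x \<in> unit_cube 0" for x
    using that \<open>in_lattice n s\<close> by (auto simp: aff_map_def unit_cube_def lam_def in_lattice_def)
  then have "aff_map n mat_one lam ` unit_cube 0 \<subseteq> P" using \<open>s \<in> P\<close> by auto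
  moreover have "\<forall>k\<ge>n. lam k = 0" by (simp add: lam_def)
  ultimately have "?C 0" using unimodular_mat_one by blast
  then have "?C (cube_number n P)" unfolding cube_number_def
    by (rule GreatestI_nat[where b = n]) auto
  then show thesis using that by blast
qed

section \<open>Unimodular cubes are sums of segments\<close>

text \<open>For \<open>0 < i\<close> the image of the unit cube under \<open>x \<mapsto> M x + \<lambda>\<close> is the sum of the segments
  spanned by the first \<open>i\<close> columns of \<open>M\<close>, the translation being carried by the first segment.\<close>

definition cube_edge :: "nat \<Rightarrow> int_mat \<Rightarrow> (nat \<Rightarrow> int) \<Rightarrow> nat \<Rightarrow> (nat \<Rightarrow> real) set" where
  "cube_edge n M lam m =
    (let a = (\<lambda>k. if m = 0 then real_of_int (lam k) else 0)
     in conv_fin {a, \<lambda>k. a k + (if k < n then real_of_int (M k m) else 0)})"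

lemma unimodular_column_nonzero:
  assumes "unimodular n M" "m < n"
  obtains k where "k < n" "M k m \<noteq> 0"
proof (rule ccontr)
  assume "\<not> thesis"
  then have "\<forall>k<n. M k m = 0" using that by blast
  then have "(\<Sum>c<n. N m c * M c m) = 0" for N by simp
  moreover obtain N where "\<forall>a<n. \<forall>b<n. (\<Sum>c<n. N a c * M c b) = (if a = b then 1 else 0)"
    using assms(1) unfolding unimodular_def by blast
  ultimately show False using assms(2) by (metis zero_neq_one)
qed

lemma cube_edge_lattice_segment:
  assumes "unimodular n M" "m < n" "\<forall>k\<ge>n. lam k = 0"
  shows "lattice_polytope n (cube_edge n M lam m)" "pos_dim (cube_edge n M lam m)"
proof -
  define a where "a = (\<lambda>k. if m = 0 then real_of_int (lam k) else 0)"
  define b where "b = (\<lambda>k. a k + (if k < n then real_of_int (M k m) else 0))"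
  have edge: "cube_edge n M lam m = conv_fin {a, b}"
    by (simp add: cube_edge_def Let_def a_def b_def)
  have "in_lattice n a" "in_lattice n b" using assms(3) by (auto simp: in_lattice_def a_def b_def)
  then show "lattice_polytope n (cube_edge n M lam m)"
    unfolding edge lattice_polytope_def by (intro exI[of _ "{a, b}"]) auto
  obtain k where "k < n" "M k m \<noteq> 0" using unimodular_column_nonzero[OF assms(1,2)] .
  then have "a \<noteq> b" by (auto simp: b_def fun_eq_iff)
  moreover have "a \<in> conv_fin {a, b}" "b \<in> conv_fin {a, b}" by (simp_all add: mem_conv_fin)
  ultimately show "pos_dim (cube_edge n M lam m)" unfolding edge pos_dim_def by blast
qed

lemma msum_cube_edges_subset:
  assumes "0 < i" "i \<le> n" "\<forall>k\<ge>n. lam k = 0"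
  shows "msum_list (map (cube_edge n M lam) [0..<i]) \<subseteq> aff_map n M lam ` unit_cube i"
proof
  fix z assume "z \<in> msum_list (map (cube_edge n M lam) [0..<i])"
  then obtain f where f: "\<forall>j<i. f j \<in> cube_edge n M lam j" "z = (\<lambda>k. \<Sum>j<i. f j k)"
    unfolding msum_list_iff by auto
  define a where "a = (\<lambda>(j::nat) k. if j = 0 then real_of_int (lam k) else 0)"
  define e where "e = (\<lambda>j k. if k < n then real_of_int (M k j) else 0)"
  have "\<exists>\<theta>. 0 \<le> \<theta> \<and> \<theta> \<le> 1 \<and> f j = (\<lambda>k. a j k + \<theta> * e j k)" if "j < i" for j
  proof -
    have "f j \<in> conv_fin {a j, \<lambda>k. a j k + e j k}"
      using f(1) that by (simp add: cube_edge_def Let_def a_def e_def)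
    then obtain \<theta> where "0 \<le> \<theta>" "\<theta> \<le> 1" "f j = (\<lambda>k. a j k + \<theta> * ((a j k + e j k) - a j k))"
      by (rule conv_fin_pair)
    then show ?thesis by auto
  qed
  then obtain \<theta> where \<theta>: "\<forall>j<i. 0 \<le> \<theta> j \<and> \<theta> j \<le> 1 \<and> f j = (\<lambda>k. a j k + \<theta> j * e j k)"
    by metis
  define x where "x = (\<lambda>b. if b < i then \<theta> b else 0)"
  have "x \<in> unit_cube i" using \<theta> by (auto simp: unit_cube_def x_def)
  moreover have "z = aff_map n M lam x"
  proof
    fix k
    have "z k = (\<Sum>j<i. a j k) + (\<Sum>j<i. \<theta> j * e j k)"
      using f(2) \<theta> by (simp add: sum.distrib)
    also have "(\<Sum>j<i. a j k) = real_of_int (lam k)"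
      using \<open>0 < i\<close> by (simp add: a_def sum.delta')
    also have "(\<Sum>j<i. \<theta> j * e j k) = (if k < n then \<Sum>j<n. real_of_int (M k j) * x j else 0)"
      using \<open>i \<le> n\<close>
      by (auto simp: e_def x_def mult.commute split: if_split_asm
          intro!: sum.mono_neutral_cong_left)
    finally show "z k = aff_map n M lam x k" using assms(3) by (simp add: aff_map_def)
  qed
  ultimately show "z \<in> aff_map n M lam ` unit_cube i" by blast
qed

theorem cube_number_le_full_mink_length:
  assumes "lattice_polytope n P" "in_box n c P"
  shows "cube_number n P \<le> full_mink_length n P"
proof -
  obtain M lam where cube: "cube_number n P \<le> n" "unimodular n M" "\<forall>k\<ge>n. lam k = 0"
    "aff_map n M lam ` unit_cube (cube_number n P) \<subseteq> P"
    using cube_number_attained[OF assms(1)] .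
  let ?Ps = "map (cube_edge n M lam) [0..<cube_number n P]"
  show ?thesis
  proof (cases "cube_number n P = 0")
    case False
    have "\<forall>Q\<in>set ?Ps. lattice_polytope n Q \<and> pos_dim Q" using cube cube_edge_lattice_segment by auto
    moreover have "msum_list ?Ps \<subseteq> P" using msum_cube_edges_subset cube False by blast
    ultimately have "minkowski_decomposition n (msum_list ?Ps) ?Ps"
      "lattice_polytope n (msum_list ?Ps)"
      "in_box n c (msum_list ?Ps)"
      using assms(2) lattice_polytope_msum_list
      by (auto simp: minkowski_decomposition_def in_box_def)
    then have "length ?Ps \<le> mink_length n (msum_list ?Ps)" by (intro mink_length_ge)
    also have "\<dots> \<le> full_mink_length n P"
      using \<open>msum_list ?Ps \<subseteq> P\<close> \<open>lattice_polytope n (msum_list ?Ps)\<close> assms(2)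
      by (intro full_mink_length_ge)
    finally show ?thesis by simp
  qed simp
qed

section \<open>Long decompositions contain large unimodular cubes\<close>

lemma difference_vectors_bounded:
  fixes s t :: "nat \<Rightarrow> nat \<Rightarrow> real" and d :: "nat \<Rightarrow> int_vec"
  assumes st: "\<forall>j<L. in_lattice n (s j) \<and> in_lattice n (t j) \<and> s j \<noteq> t j"
    and width: "\<forall>k<n. (\<Sum>j<L. \<bar>t j k - s j k\<bar>) \<le> real c"
    and d: "\<forall>j<L. \<forall>k. real_of_int (d j k) = t j k - s j k"
  shows "\<forall>j\<in>{..<L}. vanishes_from n (d j) \<and> d j \<noteq> (\<lambda>_. 0) \<and> (\<forall>k. \<bar>d j k\<bar> \<le> int c)"
proof
  fix j assume "j \<in> {..<L}"
  then have j: "j < L" by simp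
  have vanish: "d j k = 0" if "n \<le> k" for k
  proof -
    have "s j k = 0" "t j k = 0" using st j that by (auto simp: in_lattice_def)
    then show ?thesis using d j by (metis diff_self of_int_eq_0_iff)
  qed
  obtain k where "s j k \<noteq> t j k" using st j by (auto simp: fun_eq_iff)
  then have "d j k \<noteq> 0" using d j by (metis eq_iff_diff_eq_0 of_int_0)
  then have "d j \<noteq> (\<lambda>_. 0)" by auto
  moreover have "\<bar>d j k\<bar> \<le> int c" for k
  proof (cases "k < n")
    case True
    have "\<bar>t j k - s j k\<bar> \<le> (\<Sum>j<L. \<bar>t j k - s j k\<bar>)" using j by (intro member_le_sum) auto
    then have "\<bar>real_of_int (d j k)\<bar> \<le> real c" using width True d j by force
    then show ?thesis by linarith
  qed (use vanish in simp)
  ultimately show "vanishes_from n (d j) \<and> d j \<noteq> (\<lambda>_. 0) \<and> (\<forall>k. \<bar>d j k\<bar> \<le> int c)"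
    using vanish by (simp add: vanishes_from_def)
qed

lemma difference_vectors_column_count:
  fixes s t :: "nat \<Rightarrow> nat \<Rightarrow> real" and d :: "nat \<Rightarrow> int_vec"
  assumes vanish: "\<forall>j\<in>{..<L}. vanishes_from n (d j)"
    and width: "\<forall>k<n. (\<Sum>j<L. \<bar>t j k - s j k\<bar>) \<le> real c"
    and d: "\<forall>j<L. \<forall>k. real_of_int (d j k) = t j k - s j k"
  shows "card {j\<in>{..<L}. d j k \<noteq> 0} \<le> c"
proof (cases "k < n")
  case True
  let ?A = "{j\<in>{..<L}. d j k \<noteq> 0}"
  have "real (card ?A) = (\<Sum>j\<in>?A. 1)" by simp
  also have "\<dots> \<le> (\<Sum>j\<in>?A. \<bar>t j k - s j k\<bar>)"
  proof (rule sum_mono)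
    fix j assume "j \<in> ?A"
    then have "1 \<le> \<bar>real_of_int (d j k)\<bar>" by (intro Ints_nonzero_abs_ge1) auto
    then show "1 \<le> \<bar>t j k - s j k\<bar>" using d \<open>j \<in> ?A\<close> by simp
  qed
  also have "\<dots> \<le> (\<Sum>j<L. \<bar>t j k - s j k\<bar>)" by (intro sum_mono2) auto
  also have "\<dots> \<le> real c" using width True by simp
  finally show ?thesis by simp
next
  case False
  then have empty: "{j\<in>{..<L}. d j k \<noteq> 0} = {}" using vanish by (auto simp: vanishes_from_def)
  show ?thesis unfolding empty by simp
qed

lemma msum_list_convex_choice:
  assumes "\<forall>Q\<in>set Ps. lattice_polytope n Q" "\<forall>j<length Ps. s j \<in> Ps ! j \<and> t j \<in> Ps ! j"
    and "\<forall>j. 0 \<le> \<tau> j \<and> \<tau> j \<le> 1"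
  shows "(\<lambda>k. \<Sum>j<length Ps. (1 - \<tau> j) * s j k + \<tau> j * t j k) \<in> msum_list Ps"
proof -
  have "(\<lambda>k. (1 - \<tau> j) * s j k + \<tau> j * t j k) \<in> Ps ! j" if "j < length Ps" for j
  proof -
    have "lattice_polytope n (Ps ! j)" using assms(1) that by simp
    then obtain S where S: "Ps ! j = conv_fin S" unfolding lattice_polytope_def by blast
    show ?thesis unfolding S by (rule conv_fin_convex) (use assms(2,3) that S in auto)
  qed
  then show ?thesis unfolding msum_list_iff
    by (intro exI[of _ "\<lambda>j k. (1 - \<tau> j) * s j k + \<tau> j * t j k"]) auto
qed

definition pivot_weights :: "(nat \<Rightarrow> 'j) \<Rightarrow> (nat \<Rightarrow> int) \<Rightarrow> nat \<Rightarrow> (nat \<Rightarrow> real) \<Rightarrow> 'j \<Rightarrow> real"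
  where "pivot_weights js g i x j =
    (if j \<in> js ` {..<i}
     then x (the_inv_into {..<i} js j) / real_of_int (g (the_inv_into {..<i} js j))
     else 0)"

lemma pivot_weights_pivot:
  "inj_on js {..<i} \<Longrightarrow> m < i \<Longrightarrow> pivot_weights js g i x (js m) = x m / real_of_int (g m)"
  by (simp add: pivot_weights_def the_inv_into_f_f)

lemma pivot_weights_bounds:
  assumes "inj_on js {..<i}" "\<forall>m<i. 0 < g m" "x \<in> unit_cube i"
  shows "0 \<le> pivot_weights js g i x j \<and> pivot_weights js g i x j \<le> 1"
proof (cases "j \<in> js ` {..<i}")
  case True
  then obtain m where "m < i" "j = js m" by auto
  moreover have "0 \<le> x m" "x m \<le> 1" using assms(3) \<open>m < i\<close> by (auto simp: unit_cube_def)
  moreover have "1 \<le> real_of_int (g m)"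
    using assms(2) \<open>m < i\<close> by (simp add: int_one_le_iff_zero_less)
  ultimately show ?thesis using assms(1) by (simp add: pivot_weights_pivot divide_le_eq_1)
qed (simp add: pivot_weights_def)

lemma pivot_weights_sum:
  fixes js :: "nat \<Rightarrow> nat"
  assumes inj: "inj_on js {..<i}" and "js ` {..<i} \<subseteq> {..<L}" "i \<le> n" "x \<in> unit_cube i"
    and "\<forall>m<i. 0 < g m" and column: "\<And>m. m < i \<Longrightarrow> e (js m) = real_of_int (V m) * real_of_int (g m)"
  shows "(\<Sum>j<L. pivot_weights js g i x j * e j) = (\<Sum>b<n. real_of_int (V b) * x b)"
proof -
  have "(\<Sum>j<L. pivot_weights js g i x j * e j) = (\<Sum>j\<in>js ` {..<i}. pivot_weights js g i x j * e j)"
    using assms(2) by (intro sum.mono_neutral_right) (auto simp: pivot_weights_def)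
  also have "\<dots> = (\<Sum>m<i. x m / real_of_int (g m) * e (js m))"
    using inj by (simp add: sum.reindex pivot_weights_pivot)
  also have "\<dots> = (\<Sum>m<i. real_of_int (V m) * x m)"
    using assms(5) column by (intro sum.cong) auto
  also have "\<dots> = (\<Sum>b<n. real_of_int (V b) * x b)"
    using assms(3,4) by (intro sum.mono_neutral_left) (auto simp: unit_cube_def)
  finally show ?thesis .
qed

text \<open>If \<open>U\<close> sends the differences \<open>t\<^sub>j - s\<^sub>j\<close> of the pivot vectors to positive multiples of
  unit vectors, the columns of \<open>V = U\<^sup>-\<^sup>1\<close> are those differences scaled down, so the cube spanned by
  them, translated to \<open>\<Sum> s\<^sub>j\<close>, lies in the sum of the segments \<open>[s\<^sub>j, t\<^sub>j]\<close>.\<close>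

lemma cube_image_subset_msum:
  assumes inv: "inverse_mats n U V" and piv: "pivots n U d i js g"
    and img: "js ` {..<i} \<subseteq> {..<length Ps}" and lattice: "\<forall>Q\<in>set Ps. lattice_polytope n Q"
    and st: "\<forall>j<length Ps. s j \<in> Ps ! j \<and> t j \<in> Ps ! j \<and> in_lattice n (s j) \<and> in_lattice n (t j)"
    and d: "\<forall>j<length Ps. \<forall>k. real_of_int (d j k) = t j k - s j k"
    and vanish: "\<forall>j<length Ps. vanishes_from n (d j)"
  shows "aff_map n V (\<lambda>k. if k < n then \<Sum>j<length Ps. \<lfloor>s j k\<rfloor> else 0) ` unit_cube i \<subseteq> msum_list Ps"
proof
  let ?L = "length Ps"
  fix z assume "z \<in> aff_map n V (\<lambda>k. if k < n then \<Sum>j<?L. \<lfloor>s j k\<rfloor> else 0) ` unit_cube i"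
  then obtain x where x: "x \<in> unit_cube i"
    and z: "z = aff_map n V (\<lambda>k. if k < n then \<Sum>j<?L. \<lfloor>s j k\<rfloor> else 0) x" by blast
  have "i \<le> n" using piv by (rule pivots_le)
  have inj: "inj_on js {..<i}" and g: "\<forall>m<i. 0 < g m" using piv by (auto simp: pivots_def)
  have column: "t (js m) k - s (js m) k = real_of_int (V k m) * real_of_int (g m)"
    if "m < i" "k < n" for m k
  proof -
    have "d (js m) k = V k m * g m"
      using inverse_mats_column[OF inv] vanish img piv that \<open>i \<le> n\<close> by (auto simp: pivots_def)
    then have "real_of_int (d (js m) k) = real_of_int (V k m) * real_of_int (g m)" by simp
    moreover have "js m < length Ps" using img that(1) by auto
    ultimately show ?thesis using d by simp
  qed
  let ?\<tau> = "pivot_weights js g i x"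
  have "(\<lambda>k. \<Sum>j<?L. (1 - ?\<tau> j) * s j k + ?\<tau> j * t j k) \<in> msum_list Ps"
    using lattice st pivot_weights_bounds[OF inj g x] by (intro msum_list_convex_choice) auto
  moreover have "z = (\<lambda>k. \<Sum>j<?L. (1 - ?\<tau> j) * s j k + ?\<tau> j * t j k)"
  proof
    fix k
    show "z k = (\<Sum>j<?L. (1 - ?\<tau> j) * s j k + ?\<tau> j * t j k)"
    proof (cases "k < n")
      case True
      have "(\<Sum>j<?L. ?\<tau> j * (t j k - s j k)) = (\<Sum>b<n. real_of_int (V k b) * x b)"
        using column True by (intro pivot_weights_sum[OF inj img \<open>i \<le> n\<close> x g])
      moreover have "(\<Sum>j<?L. s j k) = (\<Sum>j<?L. real_of_int \<lfloor>s j k\<rfloor>)"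
        using st by (intro sum.cong) (auto simp: in_lattice_def)
      ultimately show ?thesis
        using True z by (simp add: aff_map_def algebra_simps sum.distrib sum_subtractf)
    next
      case False
      then show ?thesis using z st by (simp add: aff_map_def in_lattice_def)
    qed
  qed
  ultimately show "z \<in> msum_list Ps" by simp
qed

theorem full_mink_length_le_cube_number:
  assumes lp: "lattice_polytope n P" and box: "in_box n c P"
  shows "full_mink_length n P \<le> cube_number n P * (1 + (c + 1) * c)"
proof (cases "full_mink_length n P = 0")
  case False
  define L where "L = full_mink_length n P"
  obtain Q where Q: "lattice_polytope n Q" "Q \<subseteq> P" "L = mink_length n Q"
    using full_mink_length_attained[OF box lp] by (auto simp: L_def)
  have box_Q: "in_box n c Q" using box Q(2) by (auto simp: in_box_def)
  obtain Ps where Ps: "length Ps = L" "minkowski_decomposition n Q Ps"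
    using mink_length_attained[OF box_Q] False Q(3) by (auto simp: L_def)
  then have lattice: "\<forall>Q\<in>set Ps. lattice_polytope n Q" and box_sum: "in_box n c (msum_list Ps)"
    and "\<forall>Q\<in>set Ps. lattice_polytope n Q \<and> pos_dim Q"
    using box_Q by (auto simp: minkowski_decomposition_def)
  then obtain s t where st: "\<forall>j<L. s j \<in> Ps ! j \<and> t j \<in> Ps ! j \<and>
      in_lattice n (s j) \<and> in_lattice n (t j) \<and> s j \<noteq> t j"
    using decomposition_lattice_points Ps(1) by metis
  define d where "d = (\<lambda>j k. \<lfloor>t j k\<rfloor> - \<lfloor>s j k\<rfloor>)"
  have d: "\<forall>j<L. \<forall>k. real_of_int (d j k) = t j k - s j k"
    using st by (simp add: d_def in_lattice_def)
  have width: "\<forall>k<n. (\<Sum>j<L. \<bar>t j k - s j k\<bar>) \<le> real c"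
    using sum_spread_le_width[OF box_sum] st Ps(1) by auto
  have vectors: "\<forall>j\<in>{..<L}. vanishes_from n (d j) \<and> d j \<noteq> (\<lambda>_. 0) \<and> (\<forall>k. \<bar>d j k\<bar> \<le> int c)"
    using st by (intro difference_vectors_bounded[OF _ width d]) auto
  then have "\<forall>k. card {j\<in>{..<L}. d j k \<noteq> 0} \<le> c"
    using difference_vectors_column_count[OF _ width d] by blast
  then obtain i js g U V where piv: "card {..<L} \<le> i * (1 + (c + 1) * c)" "inverse_mats n U V"
    "js ` {..<i} \<subseteq> {..<L}" "pivots n U d i js g"
    using greedy_pivots[OF vectors] by blast
  have "aff_map n V (\<lambda>k. if k < n then \<Sum>j<length Ps. \<lfloor>s j k\<rfloor> else 0) ` unit_cube i
      \<subseteq> msum_list Ps"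
    using piv(3) st d vectors Ps(1)
    by (intro cube_image_subset_msum[OF piv(2,4) _ lattice, where s = s and t = t]) auto
  also have "msum_list Ps \<subseteq> P" using Ps(2) Q(2) by (simp add: minkowski_decomposition_def)
  finally have "i \<le> cube_number n P"
    using pivots_le[OF piv(4)] inverse_mats_unimodular[OF piv(2)] by (intro cube_number_ge) auto
  then have "i * (1 + (c + 1) * c) \<le> cube_number n P * (1 + (c + 1) * c)" by (rule mult_le_mono1)
  then show ?thesis using piv(1) by (simp add: L_def)
qed simp

lemma unbounded_iff_of_le_le_mult:
  fixes f g :: "'a \<Rightarrow> nat"
  assumes "\<And>x. f x \<le> g x" "\<And>x. g x \<le> f x * B"
  shows "\<not> bdd_above (range f) \<longleftrightarrow> \<not> bdd_above (range g)"
proof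
  assume "\<not> bdd_above (range f)"
  then show "\<not> bdd_above (range g)"
    using assms(1) order_trans unfolding bdd_above_def by (metis rangeE rangeI)
next
  assume unbounded: "\<not> bdd_above (range g)"
  show "\<not> bdd_above (range f)"
  proof
    assume "bdd_above (range f)"
    then obtain b where "\<And>x. f x \<le> b" by (auto simp: bdd_above_def)
    then have "\<And>x. g x \<le> b * B" using assms(2) order_trans mult_le_mono1 by blast
    then show False using unbounded by (auto simp: bdd_above_def)
  qed
qed

theorem mainTheorem13:
  fixes q :: nat and n :: "nat \<Rightarrow> nat" and P :: "nat \<Rightarrow> (nat \<Rightarrow> real) set"
  assumes q: "\<exists>p k. prime p \<and> k \<ge> 1 \<and> q = p ^ k"
    and poly: "\<And>i. lattice_polytope (n i) (P i)"
    and box: "\<And>i x j. x \<in> P i \<Longrightarrow> j < n i \<Longrightarrow> 0 \<le> x j \<and> x j \<le> real q - 2"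
  shows "\<not> bdd_above (range (\<lambda>i. cube_number (n i) (P i))) \<longleftrightarrow>
         \<not> bdd_above (range (\<lambda>i. full_mink_length (n i) (P i)))"
proof -
  obtain p k where "prime p" "k \<ge> 1" "q = p ^ k" using q by blast
  then have "2 \<le> q" using prime_ge_2_nat[of p] power_increasing[of 1 k p] by simp
  then have box_i: "in_box (n i) (q - 2) (P i)" for i
    using box by (auto simp: in_box_def of_nat_diff)
  show ?thesis
  proof (rule unbounded_iff_of_le_le_mult)
    fix i
    show "cube_number (n i) (P i) \<le> full_mink_length (n i) (P i)"
      by (rule cube_number_le_full_mink_length[OF poly box_i])
    show "full_mink_length (n i) (P i) \<le> cube_number (n i) (P i) * (1 + (q - 2 + 1) * (q - 2))"
      by (rule full_mink_length_le_cube_number[OF poly box_i])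
  qed
qed

end
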